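(* The Shapley–Shubik index satisfies the weak subadditivity blocker postulate but not the strong one. That is: (a) For every SVG $\mathcal{G}$ on $N$ and every bloc $I\subseteq N$ all of whose members are YES-blockers, or all of whose members are NO-blockers, we have $\widehat{SS}_I\le \sum_{k\in I} SS_k(\mathcal{G})$. (b) There exist an SVG $\mathcal{G}$ and a bloc $I$ containing a YES-blocker with $\widehat{SS}_I> \sum_{k\in I} SS_k(\mathcal{G})$.
   Context: A simple voting game (SVG) is a pair $\mathcal{G}=(N,\mathcal{W})$ with $N$ a nonempty finite set of $n$ players and $\mathcal{W}\subseteq 2^N$ (the winning sets) such that: - $\mathcal{W}$ is monotone: $S\in\mathcal{W}$ and $S\subseteq T$ imply $T\in\mathcal{W}$; - $\emptyset\notin\mathcal{W}$ and $N\in\mathcal{W}$. A division is an ordered pair $(S,N\setminus S)$ with $S\subseteq N$, where $S$ is the set of YES-voters. Player $k$ is YES-decisive in $(S,N\setminus S)$ if $k\in S\in\mathcal{W}$ and $S\setminus\{k\}\notin\mathcal{W}$. The Shapley–Shubik index is $$SS_k=\sum_{S\subseteq N:\ k\text{ YES-decisive in }S}\frac{(|S|-1)!\,(n-|S|)!}{n!}.$$ Equivalently, $SS_k$ is the fraction of orderings of $N$ in which $k$ is pivotal, i.e. is the first player whose addition to its predecessors makes the set winning. Blockers: a player $b$ is a YES-blocker if $b\in S$ for all $S\in\mathcal{W}$, and a NO-blocker if $b\notin S$ for all $S\notin\mathcal{W}$. Bloc game: for a bloc $I\subseteq N$ with a lead member $i\in I$, the bloc game $\hat{\mathcal{G}}$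 has player set $(N\setminus I)\cup\{i\}$ and winning sets $$\{S\cup\{i\}: S\subseteq N\setminus I,\ S\cup I\in\mathcal{W}\}\cup\{S: S\subseteq N\setminus I,\ S\in\mathcal{W}\}.$$ $\widehat{SS}_I$ is the index of $i$ in $\hat{\mathcal{G}}$. *)

theory Defs
  imports Complex_Main
begin

definition SVG :: "'a set \<Rightarrow> 'a set set \<Rightarrow> bool" where
  "SVG N W \<longleftrightarrow> finite N \<and> N \<noteq> {} \<and> W \<subseteq> Pow N
     \<and> (\<forall>S T. S \<in> W \<and> S \<subseteq> T \<and> T \<subseteq> N \<longrightarrow> T \<in> W)
     \<and> {} \<notin> W \<and> N \<in> W"

definition yes_decisive :: "'a set set \<Rightarrow> 'a \<Rightarrow> 'a set \<Rightarrow> bool" where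
  "yes_decisive W k S \<longleftrightarrow> k \<in> S \<and> S \<in> W \<and> S - {k} \<notin> W"

definition SS :: "'a set \<Rightarrow> 'a set set \<Rightarrow> 'a \<Rightarrow> real" where
  "SS N W k = (\<Sum>S \<in> {S. S \<subseteq> N \<and> yes_decisive W k S}.
      real (fact (card S - 1) * fact (card N - card S)) / real (fact (card N)))"

definition yes_blocker :: "'a set set \<Rightarrow> 'a \<Rightarrow> bool" where
  "yes_blocker W b \<longleftrightarrow> (\<forall>S \<in> W. b \<in> S)"

definition no_blocker :: "'a set \<Rightarrow> 'a set set \<Rightarrow> 'a \<Rightarrow> bool" where
  "no_blocker N W b \<longleftrightarrow> (\<forall>S. S \<subseteq> N \<and> S \<notin> W \<longrightarrow> b \<notin> S)"

definition bloc_players :: "'a set \<Rightarrow> 'a set \<Rightarrow> 'a \<Rightarrow> 'a set" where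
  "bloc_players N I i = (N - I) \<union> {i}"

definition bloc_wins :: "'a set \<Rightarrow> 'a set set \<Rightarrow> 'a set \<Rightarrow> 'a \<Rightarrow> 'a set set" where
  "bloc_wins N W I i =
     {S \<union> {i} | S. S \<subseteq> N - I \<and> S \<union> I \<in> W} \<union> {S. S \<subseteq> N - I \<and> S \<in> W}"

definition SS_bloc :: "'a set \<Rightarrow> 'a set set \<Rightarrow> 'a set \<Rightarrow> 'a \<Rightarrow> real" where
  "SS_bloc N W I i = SS (bloc_players N I i) (bloc_wins N W I i) i"

end

(*
  Order the players at random.  If every member of the bloc I is a YES-blocker, a member k of I
  is pivotal exactly when it is the last member of I to arrive and the outsiders T arriving before
  it, together with I, form a winning set.  Hence the sum of the indices of the members of I is the
  probability that T lies in the upward-closed family U = {T. T \<union> I \<in> W}, while the bloc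
  index is the same probability when I arrives as a single player.  Waiting for the last of |I|
  players rather than for one pushes the bloc later, so |T| becomes stochastically larger; since
  the proportion of t-sets that lie in U increases with t (normalized matching), the sum of the
  individual indices is at least the bloc index.  For NO-blockers the same picture arises from the
  outsiders arriving after the first bloc member.

  Three players show that a single YES-blocker does not suffice: if player 0 is a YES-blocker and
  every two-player coalition containing 0 wins, the bloc {0, 1} becomes a dictator, with index
  1 > 2/3 + 1/6.
*)

theory Submission
  imports Defs
begin

lemma sum_mult_nonneg_if_mono:
  fixes f g :: "nat \<Rightarrow> real"
  assumes f: "\<And>i j. i \<le> j \<Longrightarrow> j < n \<Longrightarrow> f i \<le> f j"
    and g: "\<And>i j. i \<le> j \<Longrightarrow> j < n \<Longrightarrow> g i \<le> g j"
    and g_sum: "(\<Sum>k<n. g k) = 0"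
  shows "0 \<le> (\<Sum>k<n. f k * g k)"
proof -
  have "real n * (\<Sum>k<n. f k * - g k) \<le> (\<Sum>k<n. f k) * (\<Sum>k<n. - g k)"
    using Chebyshev_sum_upper[of n f "\<lambda>k. - g k"] f g by (simp add: atLeast0LessThan)
  then have "0 \<le> real n * (\<Sum>k<n. f k * g k)"
    using g_sum by (simp add: sum_negf)
  then show ?thesis
    by (cases "n = 0") (simp_all add: zero_le_mult_iff)
qed

definition upward_closed :: "'a set \<Rightarrow> 'a set set \<Rightarrow> bool" where
  "upward_closed X U \<longleftrightarrow> U \<subseteq> Pow X \<and> (\<forall>S T. S \<in> U \<longrightarrow> S \<subseteq> T \<longrightarrow> T \<subseteq> X \<longrightarrow> T \<in> U)"

lemma upward_closedD:
  "upward_closed X U \<Longrightarrow> S \<in> U \<Longrightarrow> S \<subseteq> T \<Longrightarrow> T \<subseteq> X \<Longrightarrow> T \<in> U"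
  by (simp add: upward_closed_def)

text \<open>Normalized matching: the proportion of the \<open>t\<close>-subsets of \<open>X\<close> that lie in \<open>U\<close> increases
  with \<open>t\<close>.\<close>

lemma upward_closed_card_level_le:
  assumes X: "finite X" and U: "upward_closed X U"
  shows "card {T\<in>U. card T = t} * (card X - t) \<le> card {T\<in>U. card T = Suc t} * Suc t"
proof -
  let ?A = "Sigma {T\<in>U. card T = t} (\<lambda>T. X - T)"
  let ?B = "Sigma {T\<in>U. card T = Suc t} (\<lambda>T. T)"
  have UX: "U \<subseteq> Pow X" using U by (simp add: upward_closed_def)
  have fin_U: "finite U" using X UX by (meson finite_Pow_iff rev_finite_subset)
  have fin_T: "finite T" if "T \<in> U" for T using that UX X by (meson PowD rev_finite_subset subsetD)
  have card_A: "card ?A = card {T\<in>U. card T = t} * (card X - t)"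
  proof -
    have "card ?A = (\<Sum>T\<in>{T\<in>U. card T = t}. card (X - T))"
      using fin_U X by (subst card_SigmaI) auto
    also have "\<dots> = (\<Sum>T\<in>{T\<in>U. card T = t}. card X - t)"
      using UX fin_T by (intro sum.cong refl) (auto simp: card_Diff_subset)
    finally show ?thesis by simp
  qed
  have card_B: "card ?B = card {T\<in>U. card T = Suc t} * Suc t"
    using fin_U fin_T by (subst card_SigmaI) auto
  have inj: "inj_on (\<lambda>(T, x). (insert x T, x)) ?A"
    by (auto simp: inj_on_def) (metis Diff_insert_absorb)+
  have img: "(\<lambda>(T, x). (insert x T, x)) ` ?A \<subseteq> ?B"
  proof clarsimp
    fix T x assume "T \<in> U" "x \<in> X" "x \<notin> T"
    moreover have "T \<subseteq> X" using \<open>T \<in> U\<close> UX by auto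
    ultimately have "insert x T \<in> U"
      using upward_closedD[OF U \<open>T \<in> U\<close>, of "insert x T"] by blast
    then show "insert x T \<in> U \<and> card (insert x T) = Suc (card T)"
      using fin_T \<open>T \<in> U\<close> \<open>x \<notin> T\<close> by simp
  qed
  have "finite ?B" using fin_U fin_T by auto
  then have "card ?A \<le> card ?B" by (rule card_inj_on_le[OF inj img])
  then show ?thesis using card_A card_B by simp
qed

lemma sum_over_card_levels:
  fixes h :: "nat \<Rightarrow> real"
  assumes X: "finite X" and UX: "U \<subseteq> Pow X"
  shows "(\<Sum>T\<in>U. h (card T)) = (\<Sum>t\<le>card X. real (card {T\<in>U. card T = t}) * h t)"
proof -
  have "finite U" using X UX by (meson finite_Pow_iff rev_finite_subset)
  moreover have "card ` U \<subseteq> {..card X}" using UX X by (auto intro: card_mono)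
  ultimately show ?thesis
    using sum.group[of U "{..card X}" card "\<lambda>T. h (card T)"] by simp
qed

text \<open>In a random ordering of \<open>K\<close> outsiders and an \<open>r + 1\<close>-element bloc, \<open>pivot_weight K r t\<close> is
  the probability that a given bloc member arrives last among the bloc and is preceded by exactly a
  given \<open>t\<close>-set of outsiders.\<close>

definition pivot_weight :: "nat \<Rightarrow> nat \<Rightarrow> nat \<Rightarrow> real" where
  "pivot_weight K r t = fact (t + r) * fact (K - t) / fact (K + Suc r)"

lemma pivot_weight_0: "pivot_weight K 0 t = fact t * fact (K - t) / fact K / real (Suc K)"
  by (simp add: pivot_weight_def)

lemma Suc_mult_pivot_weight:
  "real (Suc r) * pivot_weight K r t
     = fact t * fact (K - t) / fact K * (real ((r + t) choose t) / real (Suc (r + K) choose K))"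
proof -
  have lhs: "real ((r + t) choose t) = fact (t + r) / (fact t * fact r)"
    using binomial_fact[of t "r + t"] by (simp add: add.commute)
  have rhs: "real (Suc (r + K) choose K) = fact (K + Suc r) / (fact K * fact (Suc r))"
    using binomial_fact[of K "Suc (r + K)"] by (simp add: add.commute)
  show ?thesis
    unfolding lhs rhs pivot_weight_def fact_Suc[of r] by (simp add: divide_simps)
qed

lemma upward_closed_pivot_weight_le:
  assumes X: "finite X" and U: "upward_closed X U"
  shows "(\<Sum>T\<in>U. pivot_weight (card X) 0 (card T))
           \<le> real (Suc r) * (\<Sum>T\<in>U. pivot_weight (card X) r (card T))"
proof -
  define K where "K = card X"
  define c where "c t = real (card {T\<in>U. card T = t})" for t
  define p where "p t = c t * (fact t * fact (K - t) / fact K)" for t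
  define q where "q t = real ((r + t) choose t) / real (Suc (r + K) choose K)" for t
  have UX: "U \<subseteq> Pow X" using U by (simp add: upward_closed_def)
  txt \<open>\<open>p t\<close> is the proportion of the \<open>t\<close>-subsets of \<open>X\<close> that lie in \<open>U\<close>, and \<open>q\<close> is the
    distribution of the number of outsiders preceding the last of \<open>r + 1\<close> bloc members.  Both
    increase with \<open>t\<close>, so Chebyshev's sum inequality compares \<open>q\<close> with the uniform distribution
    of the single-player case.\<close>
  have p_Suc: "p t \<le> p (Suc t)" if "t < K" for t
  proof -
    have level: "c t * real (K - t) \<le> c (Suc t) * real (Suc t)"
      using upward_closed_card_level_le[OF X U, of t]
      unfolding c_def K_def of_nat_mult[symmetric] of_nat_le_iff .
    have "K - t = Suc (K - Suc t)" using that by simp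
    then have "fact (K - t) = real (K - t) * fact (K - Suc t)"
      by (simp only: fact_Suc)
    then have "p t = (c t * real (K - t)) * (fact t * fact (K - Suc t) / fact K)"
      unfolding p_def by simp
    also have "\<dots> \<le> (c (Suc t) * real (Suc t)) * (fact t * fact (K - Suc t) / fact K)"
      by (rule mult_right_mono[OF level]) simp
    also have "\<dots> = p (Suc t)"
      unfolding p_def by simp
    finally show ?thesis .
  qed
  have p_mono: "p i \<le> p j" if "i \<le> j" "j < Suc K" for i j
    using that by (induction j rule: dec_induct) (auto intro: order_trans p_Suc)
  have q_mono: "q i \<le> q j" if "i \<le> j" for i j
  proof -
    have "(r + i) choose i \<le> (r + j) choose j"
      using that
    proof (induction j rule: dec_induct)
      case (step j)
      then show ?case
        using binomial_Suc_Suc[of "r + j" j] by (simp add: add_Suc_right)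
    qed simp
    then show ?thesis
      unfolding q_def by (simp add: divide_right_mono)
  qed
  have q_sum: "(\<Sum>t<Suc K. q t) = 1"
  proof -
    have "(\<Sum>t\<le>K. real ((r + t) choose t)) = real (Suc (r + K) choose K)"
      using sum_choose_lower[of r K] by (metis of_nat_sum)
    then show ?thesis
      unfolding q_def lessThan_Suc_atMost by (simp add: sum_divide_distrib[symmetric])
  qed
  have "real (Suc r) * (\<Sum>T\<in>U. pivot_weight K r (card T)) - (\<Sum>T\<in>U. pivot_weight K 0 (card T))
      = (\<Sum>t<Suc K. c t * (real (Suc r) * pivot_weight K r t - pivot_weight K 0 t))"
    using sum_over_card_levels[OF X UX]
    by (simp add: K_def c_def lessThan_Suc_atMost sum_distrib_left sum_subtractf algebra_simps)
  also have "\<dots> = (\<Sum>t<Suc K. p t * (q t - 1 / real (Suc K)))"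
    unfolding Suc_mult_pivot_weight pivot_weight_0 p_def q_def by (simp add: algebra_simps)
  also have "0 \<le> \<dots>"
    using p_mono q_mono q_sum by (intro sum_mult_nonneg_if_mono) (simp_all add: sum_subtractf)
  finally show ?thesis
    unfolding K_def by simp
qed

lemma SVG_winning_mono: "SVG N W \<Longrightarrow> S \<in> W \<Longrightarrow> S \<subseteq> T \<Longrightarrow> T \<subseteq> N \<Longrightarrow> T \<in> W"
  unfolding SVG_def by blast

lemma SS_eq_sum_image:
  assumes "{S. S \<subseteq> N \<and> yes_decisive W k S} = g ` A" and "inj_on g A"
  shows "SS N W k
           = (\<Sum>T\<in>A. real (fact (card (g T) - 1) * fact (card N - card (g T))) / real (fact (card N)))"
  unfolding SS_def assms(1) sum.reindex[OF assms(2)] by simp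

locale bloc_game =
  fixes N :: "'a set" and W :: "'a set set" and I :: "'a set" and i :: 'a
  assumes SVG: "SVG N W" and bloc_subset: "I \<subseteq> N" and lead_in_bloc: "i \<in> I"
begin

lemma finite_N: "finite N"
  using SVG by (simp add: SVG_def)

lemma finite_I: "finite I"
  using finite_N bloc_subset by (rule finite_subset[rotated])

lemma card_bloc_Suc: "card I = Suc (card I - 1)"
  using finite_I lead_in_bloc by (cases "card I") auto

lemma card_players: "card N = card (N - I) + card I"
  using card_Diff_subset[OF finite_I bloc_subset] card_mono[OF finite_N bloc_subset] by simp

lemma bloc_players_eq: "bloc_players N I i = insert i (N - I)"
  using lead_in_bloc by (auto simp: bloc_players_def)

lemma card_bloc_players: "card (bloc_players N I i) = Suc (card (N - I))"
  using finite_N lead_in_bloc by (simp add: bloc_players_eq)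

lemma SS_bloc_le_sum_SS:
  assumes U: "upward_closed (N - I) U"
    and bloc: "SS_bloc N W I i = (\<Sum>T\<in>U. pivot_weight (card (N - I)) 0 (card T))"
    and members: "\<And>k. k \<in> I \<Longrightarrow>
      SS N W k = (\<Sum>T\<in>U. pivot_weight (card (N - I)) (card I - 1) (card T))"
  shows "SS_bloc N W I i \<le> (\<Sum>k\<in>I. SS N W k)"
proof -
  have "SS_bloc N W I i
      \<le> real (Suc (card I - 1)) * (\<Sum>T\<in>U. pivot_weight (card (N - I)) (card I - 1) (card T))"
    unfolding bloc using finite_N U by (rule upward_closed_pivot_weight_le[OF finite_Diff])
  also have "\<dots> = real (card I) * (\<Sum>T\<in>U. pivot_weight (card (N - I)) (card I - 1) (card T))"
    by (simp only: card_bloc_Suc[symmetric])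
  also have "\<dots> = (\<Sum>k\<in>I. SS N W k)"
    using members by simp
  finally show ?thesis .
qed

definition wins_with_bloc :: "'a set set" where
  "wins_with_bloc = {T. T \<subseteq> N - I \<and> T \<union> I \<in> W}"

lemma upward_closed_wins_with_bloc: "upward_closed (N - I) wins_with_bloc"
  unfolding upward_closed_def wins_with_bloc_def
proof (intro conjI allI impI)
  fix S T assume "S \<in> {T. T \<subseteq> N - I \<and> T \<union> I \<in> W}" "S \<subseteq> T" "T \<subseteq> N - I"
  moreover have "T \<union> I \<subseteq> N" using \<open>T \<subseteq> N - I\<close> bloc_subset by blast
  ultimately show "T \<in> {T. T \<subseteq> N - I \<and> T \<union> I \<in> W}"
    using SVG_winning_mono[OF SVG, of "S \<union> I" "T \<union> I"] by auto
qed auto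

lemma decisive_sets_yes_blockers:
  assumes yes: "\<forall>b\<in>I. yes_blocker W b" and k: "k \<in> I"
  shows "{S. S \<subseteq> N \<and> yes_decisive W k S} = (\<lambda>T. T \<union> I) ` wins_with_bloc"
proof (intro equalityI subsetI)
  fix S assume "S \<in> {S. S \<subseteq> N \<and> yes_decisive W k S}"
  then have "S \<subseteq> N" "S \<in> W" by (simp_all add: yes_decisive_def)
  moreover have "I \<subseteq> S" using yes \<open>S \<in> W\<close> by (auto simp: yes_blocker_def)
  ultimately have "S - I \<in> wins_with_bloc" "S = (S - I) \<union> I"
    by (auto simp: wins_with_bloc_def Un_absorb2)
  then show "S \<in> (\<lambda>T. T \<union> I) ` wins_with_bloc" by blast
next
  fix S assume "S \<in> (\<lambda>T. T \<union> I) ` wins_with_bloc"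
  then obtain T where "T \<in> wins_with_bloc" "S = T \<union> I" by blast
  moreover have "S - {k} \<notin> W" using yes k by (auto simp: yes_blocker_def)
  ultimately show "S \<in> {S. S \<subseteq> N \<and> yes_decisive W k S}"
    using k bloc_subset by (auto simp: wins_with_bloc_def yes_decisive_def)
qed

lemma bloc_wins_yes_blockers:
  assumes yes: "\<forall>b\<in>I. yes_blocker W b"
  shows "bloc_wins N W I i = insert i ` wins_with_bloc"
  using yes lead_in_bloc by (auto simp: bloc_wins_def wins_with_bloc_def yes_blocker_def)

lemma bloc_decisive_sets_yes_blockers:
  assumes yes: "\<forall>b\<in>I. yes_blocker W b"
  shows "{S. S \<subseteq> bloc_players N I i \<and> yes_decisive (bloc_wins N W I i) i S}
           = insert i ` wins_with_bloc"
  using lead_in_bloc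
  by (auto simp: bloc_wins_yes_blockers[OF yes] bloc_players_eq yes_decisive_def wins_with_bloc_def)

lemma SS_yes_blockers:
  assumes yes: "\<forall>b\<in>I. yes_blocker W b" and k: "k \<in> I"
  shows "SS N W k = (\<Sum>T\<in>wins_with_bloc. pivot_weight (card (N - I)) (card I - 1) (card T))"
proof -
  obtain r where r: "card I = Suc r" using card_bloc_Suc by blast
  have inj: "inj_on (\<lambda>T. T \<union> I) wins_with_bloc"
    by (rule inj_on_inverseI[of _ "\<lambda>S. S - I"]) (auto simp: wins_with_bloc_def)
  have "card (T \<union> I) = card T + card I" if "T \<in> wins_with_bloc" for T
    using that finite_N finite_I
    by (intro card_Un_disjoint) (auto simp: wins_with_bloc_def intro: finite_subset)
  then show ?thesis
    unfolding SS_eq_sum_image[OF decisive_sets_yes_blockers[OF yes k] inj]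
    by (intro sum.cong refl) (simp add: pivot_weight_def card_players r algebra_simps)
qed

lemma SS_bloc_yes_blockers:
  assumes yes: "\<forall>b\<in>I. yes_blocker W b"
  shows "SS_bloc N W I i = (\<Sum>T\<in>wins_with_bloc. pivot_weight (card (N - I)) 0 (card T))"
proof -
  have inj: "inj_on (insert i) wins_with_bloc"
    by (rule inj_on_inverseI[of _ "\<lambda>S. S - {i}"]) (auto simp: wins_with_bloc_def lead_in_bloc)
  have "card (insert i T) = Suc (card T)" if "T \<in> wins_with_bloc" for T
  proof -
    have "T \<subseteq> N - I" using that by (simp add: wins_with_bloc_def)
    then have "finite T" "i \<notin> T" using finite_N lead_in_bloc by (auto intro: finite_subset)
    then show ?thesis by simp
  qed
  then show ?thesis
    unfolding SS_bloc_def SS_eq_sum_image[OF bloc_decisive_sets_yes_blockers[OF yes] inj]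
    by (intro sum.cong refl) (simp add: pivot_weight_def card_bloc_players algebra_simps)
qed

lemma SS_bloc_le_sum_SS_yes_blockers:
  "\<forall>b\<in>I. yes_blocker W b \<Longrightarrow> SS_bloc N W I i \<le> (\<Sum>k\<in>I. SS N W k)"
  by (rule SS_bloc_le_sum_SS[OF upward_closed_wins_with_bloc SS_bloc_yes_blockers SS_yes_blockers])


text \<open>With NO-blockers, \<open>k \<in> I\<close> is pivotal iff it is the first bloc member to arrive and the
  outsiders before it lose; the family records the outsiders arriving after \<open>k\<close>.\<close>

definition complement_loses :: "'a set set" where
  "complement_loses = {T. T \<subseteq> N - I \<and> N - I - T \<notin> W}"

lemma upward_closed_complement_loses: "upward_closed (N - I) complement_loses"
  unfolding upward_closed_def complement_loses_def
proof (intro conjI allI impI)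
  fix S T assume "S \<in> {T. T \<subseteq> N - I \<and> N - I - T \<notin> W}" "S \<subseteq> T" "T \<subseteq> N - I"
  moreover have "N - I - T \<subseteq> N - I - S" "N - I - S \<subseteq> N" using \<open>S \<subseteq> T\<close> by blast+
  ultimately show "T \<in> {T. T \<subseteq> N - I \<and> N - I - T \<notin> W}"
    using SVG_winning_mono[OF SVG, of "N - I - T" "N - I - S"] by auto
qed auto

lemma winning_if_meets_no_blockers:
  assumes "\<forall>b\<in>I. no_blocker N W b" and "S \<subseteq> N" and "b \<in> I" and "b \<in> S"
  shows "S \<in> W"
  using assms by (auto simp: no_blocker_def)

lemma inj_on_insert_complement:
  assumes "k \<in> I"
  shows "inj_on (\<lambda>T. insert k (N - I - T)) complement_loses"
  by (rule inj_on_inverseI[of _ "\<lambda>S. N - I - (S - {k})"])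
    (use assms in \<open>auto simp: complement_loses_def\<close>)

lemma card_insert_complement:
  assumes "k \<in> I" and "T \<in> complement_loses"
  shows "card (insert k (N - I - T)) = Suc (card (N - I) - card T)" and "card T \<le> card (N - I)"
proof -
  have "T \<subseteq> N - I" using assms(2) by (simp add: complement_loses_def)
  moreover have "finite (N - I)" using finite_N by simp
  ultimately show "card (insert k (N - I - T)) = Suc (card (N - I) - card T)" "card T \<le> card (N - I)"
    using assms(1) by (auto simp: card_Diff_subset card_mono finite_subset)
qed

lemma decisive_sets_no_blockers:
  assumes no: "\<forall>b\<in>I. no_blocker N W b" and k: "k \<in> I"
  shows "{S. S \<subseteq> N \<and> yes_decisive W k S} = (\<lambda>T. insert k (N - I - T)) ` complement_loses"
proof (intro equalityI subsetI)
  fix S assume "S \<in> {S. S \<subseteq> N \<and> yes_decisive W k S}"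
  then have S: "S \<subseteq> N" "k \<in> S" "S - {k} \<notin> W" by (simp_all add: yes_decisive_def)
  then have "S - {k} \<subseteq> N - I"
    using winning_if_meets_no_blockers[OF no, of "S - {k}"] by blast
  with S have "N - I - (S - {k}) \<in> complement_loses" "S = insert k (N - I - (N - I - (S - {k})))"
    by (auto simp: complement_loses_def Diff_Diff_Int Int_absorb1)
  then show "S \<in> (\<lambda>T. insert k (N - I - T)) ` complement_loses" by blast
next
  fix S assume "S \<in> (\<lambda>T. insert k (N - I - T)) ` complement_loses"
  then obtain T where T: "T \<in> complement_loses" and S: "S = insert k (N - I - T)" by blast
  have "S \<subseteq> N" using S k bloc_subset by blast
  then have "S \<in> W" using winning_if_meets_no_blockers[OF no _ k] S by blast
  moreover have "S - {k} = N - I - T" using S k by blast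
  ultimately show "S \<in> {S. S \<subseteq> N \<and> yes_decisive W k S}"
    using T \<open>S \<subseteq> N\<close> S by (simp add: yes_decisive_def complement_loses_def)
qed

lemma bloc_wins_no_blockers:
  assumes no: "\<forall>b\<in>I. no_blocker N W b"
  shows "bloc_wins N W I i = insert i ` Pow (N - I) \<union> {S. S \<subseteq> N - I \<and> S \<in> W}"
proof -
  have "S \<union> I \<in> W" if "S \<subseteq> N - I" for S
    using that bloc_subset lead_in_bloc winning_if_meets_no_blockers[OF no, of "S \<union> I" i] by blast
  then show ?thesis
    unfolding bloc_wins_def by auto
qed

lemma bloc_decisive_sets_no_blockers:
  assumes no: "\<forall>b\<in>I. no_blocker N W b"
  shows "{S. S \<subseteq> bloc_players N I i \<and> yes_decisive (bloc_wins N W I i) i S}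
           = (\<lambda>T. insert i (N - I - T)) ` complement_loses"
proof (intro equalityI subsetI)
  fix S assume "S \<in> {S. S \<subseteq> bloc_players N I i \<and> yes_decisive (bloc_wins N W I i) i S}"
  then have S: "S - {i} \<subseteq> N - I" "i \<in> S" "S - {i} \<notin> W"
    by (auto simp: bloc_players_eq yes_decisive_def bloc_wins_no_blockers[OF no])
  then have "N - I - (S - {i}) \<in> complement_loses" "S = insert i (N - I - (N - I - (S - {i})))"
    by (auto simp: complement_loses_def Diff_Diff_Int Int_absorb1)
  then show "S \<in> (\<lambda>T. insert i (N - I - T)) ` complement_loses" by blast
next
  fix S assume "S \<in> (\<lambda>T. insert i (N - I - T)) ` complement_loses"
  then obtain T where T: "T \<in> complement_loses" and S: "S = insert i (N - I - T)" by blast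
  moreover have "S - {i} = N - I - T" "i \<notin> N - I - T" using S lead_in_bloc by blast+
  ultimately show "S \<in> {S. S \<subseteq> bloc_players N I i \<and> yes_decisive (bloc_wins N W I i) i S}"
    by (auto simp: bloc_players_eq yes_decisive_def bloc_wins_no_blockers[OF no] complement_loses_def)
qed

lemma SS_no_blockers:
  assumes no: "\<forall>b\<in>I. no_blocker N W b" and k: "k \<in> I"
  shows "SS N W k = (\<Sum>T\<in>complement_loses. pivot_weight (card (N - I)) (card I - 1) (card T))"
proof -
  obtain r where r: "card I = Suc r" using card_bloc_Suc by blast
  show ?thesis
    unfolding SS_eq_sum_image[OF decisive_sets_no_blockers[OF no k] inj_on_insert_complement[OF k]]
    by (intro sum.cong refl)
      (simp add: pivot_weight_def card_players r card_insert_complement[OF k] algebra_simps)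
qed

lemma SS_bloc_no_blockers:
  assumes no: "\<forall>b\<in>I. no_blocker N W b"
  shows "SS_bloc N W I i = (\<Sum>T\<in>complement_loses. pivot_weight (card (N - I)) 0 (card T))"
  unfolding SS_bloc_def
    SS_eq_sum_image[OF bloc_decisive_sets_no_blockers[OF no] inj_on_insert_complement[OF lead_in_bloc]]
  by (intro sum.cong refl)
    (simp add: pivot_weight_def card_bloc_players card_insert_complement[OF lead_in_bloc] algebra_simps)

lemma SS_bloc_le_sum_SS_no_blockers:
  "\<forall>b\<in>I. no_blocker N W b \<Longrightarrow> SS_bloc N W I i \<le> (\<Sum>k\<in>I. SS N W k)"
  by (rule SS_bloc_le_sum_SS[OF upward_closed_complement_loses SS_bloc_no_blockers SS_no_blockers])

end

lemma decisive_sets_eq: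
  "{S. S \<subseteq> N \<and> yes_decisive W k S} = {S \<in> W. S \<subseteq> N \<and> k \<in> S \<and> S - {k} \<notin> W}"
  unfolding yes_decisive_def by auto

lemma Collect_mem_insert:
  "{x \<in> insert a A. P x} = (if P a then insert a {x \<in> A. P x} else {x \<in> A. P x})"
  by auto

definition example_wins :: "nat set set" where
  "example_wins = {{0, 1}, {0, 2}, {0, 1, 2}}"

lemma SVG_example: "SVG {0, 1, 2} example_wins"
proof -
  have "\<forall>T \<in> Pow {0, 1, 2 :: nat}. \<forall>S \<in> example_wins. S \<subseteq> T \<longrightarrow> T \<in> example_wins"
    unfolding example_wins_def by (simp add: Pow_insert insert_commute)
  moreover have "example_wins \<subseteq> Pow {0, 1, 2}" "{} \<notin> example_wins" "{0, 1, 2} \<in> example_wins"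
    by (auto simp: example_wins_def)
  ultimately show ?thesis
    unfolding SVG_def by (simp add: Ball_def) blast
qed

lemma yes_blocker_example: "yes_blocker example_wins 0"
  unfolding yes_blocker_def example_wins_def by auto

lemma SS_example_0: "SS {0, 1, 2} example_wins 0 = 2 / 3"
proof -
  have decisive: "{S. S \<subseteq> {0, 1, 2} \<and> yes_decisive example_wins 0 S} = {{0, 1}, {0, 2}, {0, 1, 2 :: nat}}"
    unfolding decisive_sets_eq example_wins_def Collect_mem_insert
    by (simp add: set_eq_subset insert_Diff_if)
  show ?thesis
    unfolding SS_def decisive by (simp add: set_eq_subset fact_numeral)
qed

lemma SS_example_1: "SS {0, 1, 2} example_wins 1 = 1 / 6"
proof -
  have decisive: "{S. S \<subseteq> {0, 1, 2} \<and> yes_decisive example_wins 1 S} = {{0, 1 :: nat}}"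
    unfolding decisive_sets_eq example_wins_def Collect_mem_insert
    by (simp add: set_eq_subset insert_Diff_if)
  show ?thesis
    unfolding SS_def decisive by (simp add: fact_numeral)
qed

lemma bloc_wins_example: "bloc_wins {0, 1, 2} example_wins {0, 1} 0 = {{0}, {0, 2 :: nat}}"
proof -
  have outsiders: "{0, 1, 2} - {0, 1} = {2 :: nat}" by auto
  have "S \<union> {0, 1} \<in> example_wins" if "S \<subseteq> {2}" for S
    using that unfolding subset_singleton_iff example_wins_def by (auto simp: insert_commute)
  then have with_bloc: "{S \<union> {0} | S. S \<subseteq> {2} \<and> S \<union> {0, 1} \<in> example_wins}
      = (\<lambda>S. S \<union> {0}) ` Pow {2 :: nat}"
    by blast
  have without_bloc: "{S. S \<subseteq> {2 :: nat} \<and> S \<in> example_wins} = {}"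
    using yes_blocker_example by (auto simp: yes_blocker_def)
  show ?thesis
    using with_bloc unfolding bloc_wins_def outsiders without_bloc
    by (simp add: Pow_insert insert_commute)
qed

lemma SS_bloc_example: "SS_bloc {0, 1, 2} example_wins {0, 1} 0 = 1"
proof -
  have "bloc_players {0, 1, 2} {0, 1} 0 = {0, 2 :: nat}" by (auto simp: bloc_players_def)
  moreover have "{S. S \<subseteq> {0, 2} \<and> yes_decisive {{0}, {0, 2}} 0 S} = {{0}, {0, 2 :: nat}}"
    unfolding decisive_sets_eq Collect_mem_insert by (simp add: insert_Diff_if)
  ultimately show ?thesis
    unfolding SS_bloc_def bloc_wins_example SS_def by (simp add: fact_numeral)
qed

theorem theorem2:
  shows "(\<forall>(N :: 'a set) W I i.
            SVG N W \<and> I \<subseteq> N \<and> i \<in> I \<and>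
            ((\<forall>b \<in> I. yes_blocker W b) \<or> (\<forall>b \<in> I. no_blocker N W b))
            \<longrightarrow> SS_bloc N W I i \<le> (\<Sum>k \<in> I. SS N W k))
       \<and> (\<exists>(N :: nat set) W I i.
            SVG N W \<and> I \<subseteq> N \<and> i \<in> I \<and> (\<exists>b \<in> I. yes_blocker W b) \<and>
            SS_bloc N W I i > (\<Sum>k \<in> I. SS N W k))"
proof (intro conjI allI impI)
  fix N :: "'a set" and W I i
  assume assms: "SVG N W \<and> I \<subseteq> N \<and> i \<in> I \<and>
    ((\<forall>b \<in> I. yes_blocker W b) \<or> (\<forall>b \<in> I. no_blocker N W b))"
  then interpret bloc_game N W I i
    by unfold_locales auto
  show "SS_bloc N W I i \<le> (\<Sum>k \<in> I. SS N W k)"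
    using assms SS_bloc_le_sum_SS_yes_blockers SS_bloc_le_sum_SS_no_blockers by blast
next
  have "SS_bloc {0, 1, 2} example_wins {0, 1} 0 > (\<Sum>k \<in> {0, 1}. SS {0, 1, 2} example_wins k)"
    using SS_bloc_example SS_example_0 SS_example_1 by simp
  then show "\<exists>(N :: nat set) W I i.
      SVG N W \<and> I \<subseteq> N \<and> i \<in> I \<and> (\<exists>b \<in> I. yes_blocker W b) \<and>
      SS_bloc N W I i > (\<Sum>k \<in> I. SS N W k)"
    using SVG_example yes_blocker_example
    by (intro exI[of _ "{0, 1, 2}"] exI[of _ example_wins] exI[of _ "{0, 1}"] exI[of _ 0]) auto
qed

end
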